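(* Let $\Lambda$ be diagonal with entries in $[0,1]$, $W$ row-stochastic, $\beta\in[0,1]^n$, and set $W^{(1)}=[\mathbf 1-\beta]W$, $W^{(2)}=[\beta]W$. Then, with $\bar A_d:=\begin{pmatrix}0 & I\\ \Lambda W^{(2)} & \Lambda W^{(1)}\end{pmatrix}$, one has $\rho(\bar A_d)\ge\rho(\Lambda W)$.
   Context: $[v]$ denotes the diagonal matrix with diagonal $v$; $\mathbf 1$ is the all-ones vector; $\rho$ is spectral radius. *)

theory Defs
  imports "Jordan_Normal_Form.Spectral_Radius"
begin

definition diag_of_vec :: "'a::zero vec \<Rightarrow> 'a mat" where
  "diag_of_vec v = mat (dim_vec v) (dim_vec v) (\<lambda>(i,j). if i = j then v $ i else 0)"

definition row_stochastic :: "real mat \<Rightarrow> bool" where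
  "row_stochastic W \<longleftrightarrow>
     (\<forall>i<dim_row W. \<forall>j<dim_col W. W $$ (i,j) \<ge> 0) \<and>
     (\<forall>i<dim_row W. (\<Sum>j<dim_col W. W $$ (i,j)) = 1)"

definition rho :: "real mat \<Rightarrow> real" where
  "rho A = spectral_radius (map_mat complex_of_real A)"

end

theory Submission
  imports Defs
begin

text \<open>
  Let \<open>r = \<rho>(\<Lambda> W)\<close>. As \<open>\<Lambda> W\<close> is nonnegative with row sums at most 1, \<open>r \<le> 1\<close>, and taking
  moduli entrywise in an eigenvector for an eigenvalue of modulus \<open>r\<close> gives a nonnegative
  \<open>y \<noteq> 0\<close> with \<open>\<Lambda> W y \<ge> r y\<close>. Split \<open>\<Lambda> W = P + Q\<close> with \<open>P = \<Lambda> [\<beta>] W\<close> and \<open>Q = \<Lambda> [1 - \<beta>] W\<close>,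
  both nonnegative. Then \<open>x = (y, r y)\<close> satisfies \<open>A\<^sub>d x \<ge> r x\<close>: the upper block is an equality
  and \<open>r\<^sup>2 y \<le> r P y + r Q y \<le> P y + r Q y\<close> because \<open>r \<le> 1\<close>. Finally, a nonnegative matrix \<open>B\<close>
  with \<open>B x \<ge> r x\<close> for some nonnegative \<open>x \<noteq> 0\<close> has \<open>\<rho>(B) \<ge> r\<close> (Collatz--Wielandt): if
  \<open>\<rho>(B) < s < r\<close>, the powers of \<open>B / s\<close> are bounded by the Jordan normal form, whereas
  \<open>(B / s)\<^sup>k x \<ge> (r / s)\<^sup>k x\<close> grows without bound.
\<close>

lemma index_mult_mat_vec_sum:
  assumes "A \<in> carrier_mat nr nc" and "x \<in> carrier_vec nc" and "i < nr"
  shows "(A *\<^sub>v x) $ i = (\<Sum>j<nc. A $$ (i,j) * x $ j)"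
  using assms by (auto simp: scalar_prod_def atLeast0LessThan)

lemma index_mult_mat_sum:
  assumes "A \<in> carrier_mat nr n" and "B \<in> carrier_mat n nc" and "i < nr" and "j < nc"
  shows "(A * B) $$ (i,j) = (\<Sum>l<n. A $$ (i,l) * B $$ (l,j))"
  using assms by (auto simp: scalar_prod_def atLeast0LessThan)

lemma nonzero_vec_index:
  assumes "x \<in> carrier_vec n" and "x \<noteq> 0\<^sub>v n"
  obtains i where "i < n" and "x $ i \<noteq> 0"
  using assms by (metis carrier_vecD eq_vecI index_zero_vec(1,2))

subsection \<open>Entrywise order on vectors and matrices\<close>

lemma less_eq_vecI:
  "dim_vec v = dim_vec w \<Longrightarrow> (\<And>i. i < dim_vec w \<Longrightarrow> v $ i \<le> w $ i) \<Longrightarrow> v \<le> w"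
  unfolding less_eq_vec_def by blast

lemma less_eq_vecD: "v \<le> w \<Longrightarrow> i < dim_vec w \<Longrightarrow> v $ i \<le> w $ i"
  unfolding less_eq_vec_def by blast

lemma dim_vec_eq_if_less_eq: "v \<le> w \<Longrightarrow> dim_vec v = dim_vec w"
  unfolding less_eq_vec_def by blast

lemma nonneg_vecI: "x \<in> carrier_vec n \<Longrightarrow> (\<And>i. i < n \<Longrightarrow> 0 \<le> x $ i) \<Longrightarrow> 0\<^sub>v n \<le> x"
  by (rule less_eq_vecI) auto

lemma nonneg_vecD: "0\<^sub>v n \<le> x \<Longrightarrow> i < n \<Longrightarrow> 0 \<le> x $ i"
  unfolding less_eq_vec_def by (metis index_zero_vec(1,2))

lemma carrier_vec_if_nonneg: "0\<^sub>v n \<le> x \<Longrightarrow> x \<in> carrier_vec n"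
  unfolding less_eq_vec_def by (metis carrier_vec_dim_vec index_zero_vec(2))

lemma nonneg_matI:
  "A \<in> carrier_mat nr nc \<Longrightarrow> (\<And>i j. i < nr \<Longrightarrow> j < nc \<Longrightarrow> 0 \<le> A $$ (i,j)) \<Longrightarrow> 0\<^sub>m nr nc \<le> A"
  unfolding less_eq_mat_def by auto

lemma nonneg_matD: "0\<^sub>m nr nc \<le> A \<Longrightarrow> i < nr \<Longrightarrow> j < nc \<Longrightarrow> 0 \<le> A $$ (i,j)"
  unfolding less_eq_mat_def by (metis index_zero_mat(1,2,3))

lemma smult_vec_mono:
  fixes v w :: "'a :: ordered_semiring vec"
  assumes c: "0 \<le> c" and vw: "v \<le> w"
  shows "c \<cdot>\<^sub>v v \<le> c \<cdot>\<^sub>v w"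
proof (rule less_eq_vecI)
  show "dim_vec (c \<cdot>\<^sub>v v) = dim_vec (c \<cdot>\<^sub>v w)" using dim_vec_eq_if_less_eq[OF vw] by simp
  fix i assume "i < dim_vec (c \<cdot>\<^sub>v w)"
  hence i: "i < dim_vec w" "i < dim_vec v" using dim_vec_eq_if_less_eq[OF vw] by simp_all
  show "(c \<cdot>\<^sub>v v) $ i \<le> (c \<cdot>\<^sub>v w) $ i"
    using mult_left_mono[OF less_eq_vecD[OF vw i(1)] c] i by simp
qed

lemma mult_mat_vec_mono:
  fixes A :: "'a :: ordered_semiring_0 mat"
  assumes A: "A \<in> carrier_mat nr nc" and A_nonneg: "0\<^sub>m nr nc \<le> A"
    and y: "y \<in> carrier_vec nc" and xy: "x \<le> y"
  shows "A *\<^sub>v x \<le> A *\<^sub>v y"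
proof (rule less_eq_vecI)
  have x: "x \<in> carrier_vec nc"
    using dim_vec_eq_if_less_eq[OF xy] carrier_vecD[OF y] by (intro carrier_vecI) simp
  show "dim_vec (A *\<^sub>v x) = dim_vec (A *\<^sub>v y)" by simp
  fix i assume "i < dim_vec (A *\<^sub>v y)"
  hence i: "i < nr" using A by simp
  have "(\<Sum>j<nc. A $$ (i,j) * x $ j) \<le> (\<Sum>j<nc. A $$ (i,j) * y $ j)"
    using nonneg_matD[OF A_nonneg i] less_eq_vecD[OF xy] carrier_vecD[OF y]
    by (intro sum_mono mult_left_mono) auto
  thus "(A *\<^sub>v x) $ i \<le> (A *\<^sub>v y) $ i"
    unfolding index_mult_mat_vec_sum[OF A x i] index_mult_mat_vec_sum[OF A y i] .
qed

lemma nonneg_mat_mult: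
  fixes A B :: "'a :: ordered_semiring_0 mat"
  assumes A: "A \<in> carrier_mat nr n" and B: "B \<in> carrier_mat n nc"
    and A_nonneg: "0\<^sub>m nr n \<le> A" and B_nonneg: "0\<^sub>m n nc \<le> B"
  shows "0\<^sub>m nr nc \<le> A * B"
proof (rule nonneg_matI[OF mult_carrier_mat[OF A B]])
  fix i j assume i: "i < nr" and j: "j < nc"
  have "0 \<le> (\<Sum>l<n. A $$ (i,l) * B $$ (l,j))"
    using nonneg_matD[OF A_nonneg i] nonneg_matD[OF B_nonneg _ j]
    by (intro sum_nonneg mult_nonneg_nonneg) auto
  thus "0 \<le> (A * B) $$ (i,j)" unfolding index_mult_mat_sum[OF A B i j] .
qed

lemma nonneg_mat_pow:
  fixes A :: "'a :: linordered_semidom mat"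
  assumes A: "A \<in> carrier_mat n n" and A_nonneg: "0\<^sub>m n n \<le> A"
  shows "0\<^sub>m n n \<le> A ^\<^sub>m k"
proof (induction k)
  case 0
  show ?case by (rule nonneg_matI) (use A in auto)
next
  case (Suc k)
  show ?case using nonneg_mat_mult[OF pow_carrier_mat[OF A] A Suc A_nonneg] by simp
qed

lemma smult_le_mult_mat_vec_pow:
  fixes A :: "'a :: linordered_field mat"
  assumes A: "A \<in> carrier_mat n n" and A_nonneg: "0\<^sub>m n n \<le> A"
    and x: "x \<in> carrier_vec n" and q: "0 \<le> q" and Ax: "q \<cdot>\<^sub>v x \<le> A *\<^sub>v x"
  shows "q ^ k \<cdot>\<^sub>v x \<le> A ^\<^sub>m k *\<^sub>v x"
proof (induction k)
  case 0
  show ?case using A x by simp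
next
  case (Suc k)
  have Ak: "A ^\<^sub>m k \<in> carrier_mat n n" using A by simp
  have "q ^ Suc k \<cdot>\<^sub>v x = q \<cdot>\<^sub>v (q ^ k \<cdot>\<^sub>v x)" by (simp add: smult_smult_assoc)
  also have "\<dots> \<le> q \<cdot>\<^sub>v (A ^\<^sub>m k *\<^sub>v x)" by (rule smult_vec_mono[OF q Suc])
  also have "\<dots> = A ^\<^sub>m k *\<^sub>v (q \<cdot>\<^sub>v x)" using mult_mat_vec[OF Ak x] by simp
  also have "\<dots> \<le> A ^\<^sub>m k *\<^sub>v (A *\<^sub>v x)"
    using A x by (intro mult_mat_vec_mono[OF Ak nonneg_mat_pow[OF A A_nonneg] _ Ax]) simp
  also have "\<dots> = A ^\<^sub>m Suc k *\<^sub>v x" using assoc_mult_mat_vec[OF Ak A x] by simp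
  finally show ?case .
qed

lemma smult_mat_mult_mat_vec:
  fixes A :: "'a :: comm_semiring_0 mat"
  assumes "A \<in> carrier_mat nr nc" and "v \<in> carrier_vec nc"
  shows "(c \<cdot>\<^sub>m A) *\<^sub>v v = c \<cdot>\<^sub>v (A *\<^sub>v v)"
  using assms by (intro eq_vecI) (auto simp: scalar_prod_def sum_distrib_left mult.assoc)

lemma smult_mat_inverse_cancel:
  fixes A :: "'a :: field mat"
  assumes "c \<noteq> 0"
  shows "inverse c \<cdot>\<^sub>m (c \<cdot>\<^sub>m A) = A"
  using assms by (intro eq_matI) auto

lemma eigenvector_smult:
  fixes A :: "'a :: comm_ring_1 mat"
  assumes A: "A \<in> carrier_mat n n" and ev: "eigenvector A v \<mu>"
  shows "eigenvector (c \<cdot>\<^sub>m A) v (c * \<mu>)"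
proof -
  have v: "v \<in> carrier_vec n" "v \<noteq> 0\<^sub>v n" "A *\<^sub>v v = \<mu> \<cdot>\<^sub>v v"
    using ev A unfolding eigenvector_def by auto
  have "(c \<cdot>\<^sub>m A) *\<^sub>v v = (c * \<mu>) \<cdot>\<^sub>v v"
    using v A by (simp add: smult_mat_mult_mat_vec smult_smult_assoc)
  with v A show ?thesis unfolding eigenvector_def by auto
qed

lemma spectral_radius_smult_le:
  assumes A: "A \<in> carrier_mat n n" and n: "0 < n" and c: "c \<noteq> 0"
  shows "spectral_radius (c \<cdot>\<^sub>m A) \<le> norm c * spectral_radius A"
proof -
  have cA: "c \<cdot>\<^sub>m A \<in> carrier_mat n n" using A by simp
  obtain \<mu> where "\<mu> \<in> spectrum (c \<cdot>\<^sub>m A)" and sr: "spectral_radius (c \<cdot>\<^sub>m A) = norm \<mu>"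
    using spectral_radius_mem_max(1)[OF cA n] by auto
  then obtain v where "eigenvector (c \<cdot>\<^sub>m A) v \<mu>"
    unfolding spectrum_def eigenvalue_def by auto
  from eigenvector_smult[OF cA this, of "inverse c"]
  have "eigenvector A v (inverse c * \<mu>)"
    unfolding smult_mat_inverse_cancel[OF c] .
  hence "norm (inverse c * \<mu>) \<le> spectral_radius A"
    by (intro spectral_radius_mem_max(2)[OF A n] imageI) (auto simp: spectrum_def eigenvalue_def)
  hence "norm c * norm (inverse c * \<mu>) \<le> norm c * spectral_radius A"
    by (rule mult_left_mono) simp
  moreover have "norm c * norm (inverse c * \<mu>) = norm \<mu>"
    using c by (simp add: norm_mult norm_inverse)
  ultimately show ?thesis unfolding sr by simp
qed

lemma spectral_radius_smult:
  assumes A: "A \<in> carrier_mat n n" and n: "0 < n" and c: "c \<noteq> 0"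
  shows "spectral_radius (c \<cdot>\<^sub>m A) = norm c * spectral_radius A"
proof (rule antisym)
  have "spectral_radius A = spectral_radius (inverse c \<cdot>\<^sub>m (c \<cdot>\<^sub>m A))"
    unfolding smult_mat_inverse_cancel[OF c] ..
  also have "\<dots> \<le> norm (inverse c) * spectral_radius (c \<cdot>\<^sub>m A)"
    using A n c by (intro spectral_radius_smult_le) auto
  finally have "spectral_radius A \<le> inverse (norm c) * spectral_radius (c \<cdot>\<^sub>m A)"
    by (simp add: norm_inverse)
  with c show "norm c * spectral_radius A \<le> spectral_radius (c \<cdot>\<^sub>m A)"
    by (simp add: inverse_eq_divide field_simps)
qed (rule spectral_radius_smult_le[OF A n c])

lemma rho_smult:
  assumes "A \<in> carrier_mat n n" and "0 < n" and "0 < c"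
  shows "rho (c \<cdot>\<^sub>m A) = c * rho A"
proof -
  have "map_mat complex_of_real (c \<cdot>\<^sub>m A) = complex_of_real c \<cdot>\<^sub>m map_mat complex_of_real A"
    by (rule eq_matI) auto
  with assms show ?thesis
    unfolding rho_def by (simp add: spectral_radius_smult[of _ n])
qed

lemma rho_nonneg:
  assumes "A \<in> carrier_mat n n" and "0 < n"
  shows "0 \<le> rho A"
  using spectral_radius_mem_max(1)[of "map_mat complex_of_real A" n] assms
  unfolding rho_def by auto

lemma rho_less_1_bounded_pow:
  assumes A: "A \<in> carrier_mat n n" and "rho A < 1"
  obtains c where "\<And>k i j. i < n \<Longrightarrow> j < n \<Longrightarrow> \<bar>(A ^\<^sub>m k) $$ (i,j)\<bar> \<le> c"
proof -
  have "map_mat complex_of_real A \<in> carrier_mat n n" using A by simp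
  from spectral_radius_jnf_norm_bound_less_1_upper_triangular[OF this]
  obtain c where "norm_bound (map_mat complex_of_real A ^\<^sub>m k) c" for k
    using assms unfolding rho_def by auto
  hence "\<bar>(A ^\<^sub>m k) $$ (i,j)\<bar> \<le> c" if "i < n" "j < n" for k i j
    using that A of_real_hom.mat_hom_pow[OF A, of k] unfolding norm_bound_def
    by (metis (no_types, lifting) carrier_matD index_map_mat norm_of_real pow_mat_dim_square)
  with that show ?thesis by blast
qed

subsection \<open>The Collatz--Wielandt lower bound\<close>

lemma smult_le_mult_mat_vec_bounded_pow_le_1:
  fixes A :: "real mat"
  assumes A: "A \<in> carrier_mat n n" and A_nonneg: "0\<^sub>m n n \<le> A"
    and bound: "\<And>k i j. i < n \<Longrightarrow> j < n \<Longrightarrow> \<bar>(A ^\<^sub>m k) $$ (i,j)\<bar> \<le> c"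
    and x_nonneg: "0\<^sub>v n \<le> x" and x_nonzero: "x \<noteq> 0\<^sub>v n"
    and q: "0 \<le> q" and Ax: "q \<cdot>\<^sub>v x \<le> A *\<^sub>v x"
  shows "q \<le> 1"
proof (rule ccontr)
  assume "\<not> q \<le> 1"
  hence q1: "1 < q" by simp
  have x: "x \<in> carrier_vec n" using carrier_vec_if_nonneg[OF x_nonneg] .
  obtain i where i: "i < n" and xi: "0 < x $ i"
  proof -
    obtain i where "i < n" "x $ i \<noteq> 0" using nonzero_vec_index[OF x x_nonzero] .
    with nonneg_vecD[OF x_nonneg] that show ?thesis by force
  qed
  define S where "S = (\<Sum>j<n. x $ j)"
  have growth: "q ^ k * x $ i \<le> c * S" for k
  proof -
    have "q ^ k * x $ i = (q ^ k \<cdot>\<^sub>v x) $ i" using x i by simp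
    also have "\<dots> \<le> (A ^\<^sub>m k *\<^sub>v x) $ i"
      using less_eq_vecD[OF smult_le_mult_mat_vec_pow[OF A A_nonneg x q Ax, of k]] i A by simp
    also have "\<dots> = (\<Sum>j<n. (A ^\<^sub>m k) $$ (i,j) * x $ j)"
      using index_mult_mat_vec_sum[OF pow_carrier_mat[OF A] x i] .
    also have "\<dots> \<le> (\<Sum>j<n. c * x $ j)"
      using bound[OF i] nonneg_vecD[OF x_nonneg]
      by (intro sum_mono mult_right_mono) (auto intro: abs_le_D1)
    finally show ?thesis unfolding S_def sum_distrib_left .
  qed
  obtain k where "c * S / x $ i < q ^ k"
    using real_arch_pow[OF q1] by blast
  hence "c * S < q ^ k * x $ i" using xi by (simp add: pos_divide_less_eq)
  with growth[of k] show False by simp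
qed

lemma rho_ge_if_smult_le_mult_mat_vec:
  fixes A :: "real mat"
  assumes A: "A \<in> carrier_mat n n" and A_nonneg: "0\<^sub>m n n \<le> A"
    and x_nonneg: "0\<^sub>v n \<le> x" and x_nonzero: "x \<noteq> 0\<^sub>v n"
    and Ax: "r \<cdot>\<^sub>v x \<le> A *\<^sub>v x"
  shows "r \<le> rho A"
proof (rule ccontr)
  assume "\<not> r \<le> rho A"
  hence lt: "rho A < r" by simp
  have x: "x \<in> carrier_vec n" using carrier_vec_if_nonneg[OF x_nonneg] .
  obtain i where "i < n" using nonzero_vec_index[OF x x_nonzero] .
  hence n: "0 < n" by simp
  define s where "s = (rho A + r) / 2"
  have s: "0 < s" "rho A < s" "s < r" using lt rho_nonneg[OF A n] unfolding s_def by auto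
  define D where "D = inverse s \<cdot>\<^sub>m A"
  have D: "D \<in> carrier_mat n n" using A unfolding D_def by simp
  have "s * rho D = rho A"
    using s rho_smult[OF A n, of "inverse s"] unfolding D_def by (simp add: field_simps)
  hence "s * rho D < s * 1" using s by simp
  hence "rho D < 1" using s(1) by (simp only: mult_less_cancel_left_pos)
  then obtain c where bound: "\<And>k i j. i < n \<Longrightarrow> j < n \<Longrightarrow> \<bar>(D ^\<^sub>m k) $$ (i,j)\<bar> \<le> c"
    using rho_less_1_bounded_pow[OF D] by blast
  have "0\<^sub>m n n \<le> D"
    by (rule nonneg_matI[OF D]) (use A nonneg_matD[OF A_nonneg] s in \<open>simp add: D_def\<close>)
  moreover have "(r / s) \<cdot>\<^sub>v x \<le> D *\<^sub>v x"
  proof -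
    have "(r / s) \<cdot>\<^sub>v x = inverse s \<cdot>\<^sub>v (r \<cdot>\<^sub>v x)"
      by (simp add: smult_smult_assoc divide_inverse_commute)
    also have "\<dots> \<le> inverse s \<cdot>\<^sub>v (A *\<^sub>v x)"
      using s(1) by (intro smult_vec_mono Ax) simp
    also have "\<dots> = D *\<^sub>v x"
      unfolding D_def using smult_mat_mult_mat_vec[OF A x] by simp
    finally show ?thesis .
  qed
  ultimately have "r / s \<le> 1"
    using smult_le_mult_mat_vec_bounded_pow_le_1[OF D _ bound x_nonneg x_nonzero] s lt by simp
  with s show False by simp
qed

lemma nonneg_mat_rho_subinvariant_vec:
  fixes A :: "real mat"
  assumes A: "A \<in> carrier_mat n n" and A_nonneg: "0\<^sub>m n n \<le> A" and n: "0 < n"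
  obtains y where "0\<^sub>v n \<le> y" and "y \<noteq> 0\<^sub>v n" and "rho A \<cdot>\<^sub>v y \<le> A *\<^sub>v y"
proof -
  define Ac where "Ac = map_mat complex_of_real A"
  have Ac: "Ac \<in> carrier_mat n n" using A unfolding Ac_def by simp
  obtain \<mu> where "\<mu> \<in> spectrum Ac" and rho: "rho A = norm \<mu>"
    using spectral_radius_mem_max(1)[OF Ac n] unfolding rho_def Ac_def by auto
  then obtain v where "eigenvector Ac v \<mu>" unfolding spectrum_def eigenvalue_def by auto
  hence v: "v \<in> carrier_vec n" "v \<noteq> 0\<^sub>v n" "Ac *\<^sub>v v = \<mu> \<cdot>\<^sub>v v"
    using Ac unfolding eigenvector_def by auto
  define y where "y = map_vec norm v"
  have y: "y \<in> carrier_vec n" using v unfolding y_def by simp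
  have "rho A * y $ i \<le> (A *\<^sub>v y) $ i" if i: "i < n" for i
  proof -
    have "rho A * y $ i = norm ((Ac *\<^sub>v v) $ i)"
      using v i unfolding rho y_def by (simp add: norm_mult)
    also have "\<dots> = norm (\<Sum>j<n. Ac $$ (i,j) * v $ j)"
      by (simp only: index_mult_mat_vec_sum[OF Ac v(1) i])
    also have "\<dots> \<le> (\<Sum>j<n. norm (Ac $$ (i,j) * v $ j))"
      by (rule norm_sum)
    also have "\<dots> = (\<Sum>j<n. A $$ (i,j) * y $ j)"
      using A nonneg_matD[OF A_nonneg i] v i
      by (intro sum.cong) (auto simp: Ac_def y_def norm_mult)
    also have "\<dots> = (A *\<^sub>v y) $ i"
      by (simp only: index_mult_mat_vec_sum[OF A y i])
    finally show ?thesis .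
  qed
  hence "rho A \<cdot>\<^sub>v y \<le> A *\<^sub>v y"
    using A y by (intro less_eq_vecI) simp_all
  moreover have "0\<^sub>v n \<le> y"
    using y unfolding y_def by (intro nonneg_vecI) auto
  moreover have "y \<noteq> 0\<^sub>v n"
  proof
    assume "y = 0\<^sub>v n"
    moreover obtain j where "j < n" and "v $ j \<noteq> 0" using nonzero_vec_index[OF v(1,2)] .
    ultimately show False using v(1) unfolding y_def by (metis index_map_vec(1) index_zero_vec(1) carrier_vecD norm_eq_zero)
  qed
  ultimately show ?thesis using that by blast
qed

lemma nonneg_mat_row_sums_le_1_rho_le_1:
  fixes A :: "real mat"
  assumes A: "A \<in> carrier_mat n n" and A_nonneg: "0\<^sub>m n n \<le> A" and n: "0 < n"
    and row_sums: "\<And>i. i < n \<Longrightarrow> (\<Sum>j<n. A $$ (i,j)) \<le> 1"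
  shows "rho A \<le> 1"
proof -
  obtain y where y_nonneg: "0\<^sub>v n \<le> y" and y_nonzero: "y \<noteq> 0\<^sub>v n"
    and Ay: "rho A \<cdot>\<^sub>v y \<le> A *\<^sub>v y"
    using nonneg_mat_rho_subinvariant_vec[OF A A_nonneg n] .
  have y: "y \<in> carrier_vec n" using carrier_vec_if_nonneg[OF y_nonneg] .
  obtain i where i: "i < n" and i_max: "\<And>j. j < n \<Longrightarrow> y $ j \<le> y $ i"
  proof -
    have "Max ((\<lambda>j. y $ j) ` {..<n}) \<in> (\<lambda>j. y $ j) ` {..<n}"
      using n by (intro Max_in) auto
    then obtain i where "i < n" "y $ i = Max ((\<lambda>j. y $ j) ` {..<n})" by auto
    with that show ?thesis by simp
  qed
  have "0 < y $ i"
  proof -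
    obtain j where "j < n" "y $ j \<noteq> 0" using nonzero_vec_index[OF y y_nonzero] .
    with nonneg_vecD[OF y_nonneg] i_max show ?thesis by force
  qed
  moreover have "rho A * y $ i \<le> 1 * y $ i"
  proof -
    have "rho A * y $ i \<le> (A *\<^sub>v y) $ i"
      using less_eq_vecD[OF Ay, of i] i y A by simp
    also have "\<dots> = (\<Sum>j<n. A $$ (i,j) * y $ j)"
      by (rule index_mult_mat_vec_sum[OF A y i])
    also have "\<dots> \<le> (\<Sum>j<n. A $$ (i,j)) * y $ i"
      unfolding sum_distrib_right
      using nonneg_matD[OF A_nonneg i] i_max by (intro sum_mono mult_left_mono) auto
    also have "\<dots> \<le> 1 * y $ i"
      using row_sums[OF i] nonneg_vecD[OF y_nonneg i] by (rule mult_right_mono)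
    finally show ?thesis .
  qed
  ultimately show ?thesis by simp
qed

lemma four_block_companion_subinvariant:
  fixes P Q :: "real mat"
  assumes P: "P \<in> carrier_mat n n" and Q: "Q \<in> carrier_mat n n" and P_nonneg: "0\<^sub>m n n \<le> P"
    and y_nonneg: "0\<^sub>v n \<le> y" and r: "0 \<le> r" "r \<le> 1" and PQy: "r \<cdot>\<^sub>v y \<le> (P + Q) *\<^sub>v y"
  shows "r \<cdot>\<^sub>v (y @\<^sub>v (r \<cdot>\<^sub>v y)) \<le> four_block_mat (0\<^sub>m n n) (1\<^sub>m n) P Q *\<^sub>v (y @\<^sub>v (r \<cdot>\<^sub>v y))"
proof -
  have y: "y \<in> carrier_vec n" using carrier_vec_if_nonneg[OF y_nonneg] .
  have "r * (r * y $ i) \<le> (P *\<^sub>v y) $ i + r * (Q *\<^sub>v y) $ i" if i: "i < n" for i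
  proof -
    have "r * y $ i \<le> (P *\<^sub>v y) $ i + (Q *\<^sub>v y) $ i"
      using less_eq_vecD[OF PQy, of i] i P Q y by (simp add: add_mult_distrib_mat_vec)
    hence "r * (r * y $ i) \<le> r * ((P *\<^sub>v y) $ i + (Q *\<^sub>v y) $ i)"
      by (rule mult_left_mono) (rule r(1))
    also have "\<dots> = r * (P *\<^sub>v y) $ i + r * (Q *\<^sub>v y) $ i"
      by (rule distrib_left)
    also have "r * (P *\<^sub>v y) $ i \<le> (P *\<^sub>v y) $ i"
    proof (rule mult_left_le_one_le)
      have "P *\<^sub>v 0\<^sub>v n = 0\<^sub>v n" using P by (intro eq_vecI) auto
      with mult_mat_vec_mono[OF P P_nonneg y y_nonneg] have "0\<^sub>v n \<le> P *\<^sub>v y" by simp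
      thus "0 \<le> (P *\<^sub>v y) $ i" using nonneg_vecD i by blast
    qed (use r in auto)
    finally show ?thesis by simp
  qed
  hence lower_block: "r \<cdot>\<^sub>v (r \<cdot>\<^sub>v y) \<le> P *\<^sub>v y + Q *\<^sub>v (r \<cdot>\<^sub>v y)"
    using P Q y by (intro less_eq_vecI) (simp_all add: mult_mat_vec)
  have "four_block_mat (0\<^sub>m n n) (1\<^sub>m n) P Q *\<^sub>v (y @\<^sub>v (r \<cdot>\<^sub>v y))
        = (r \<cdot>\<^sub>v y) @\<^sub>v (P *\<^sub>v y + Q *\<^sub>v (r \<cdot>\<^sub>v y))"
    using P Q y by (subst four_block_mat_mult_vec[of _ n n _ n]) auto
  moreover have "r \<cdot>\<^sub>v (y @\<^sub>v (r \<cdot>\<^sub>v y)) = (r \<cdot>\<^sub>v y) @\<^sub>v (r \<cdot>\<^sub>v (r \<cdot>\<^sub>v y))"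
    using y by (intro eq_vecI) auto
  ultimately show ?thesis using append_vec_le[of "r \<cdot>\<^sub>v y" n "r \<cdot>\<^sub>v y"] lower_block y by simp
qed

lemma rho_companion_block_ge:
  fixes P Q :: "real mat"
  assumes P: "P \<in> carrier_mat n n" and Q: "Q \<in> carrier_mat n n"
    and P_nonneg: "0\<^sub>m n n \<le> P" and Q_nonneg: "0\<^sub>m n n \<le> Q"
    and rho_le_1: "rho (P + Q) \<le> 1"
  shows "rho (P + Q) \<le> rho (four_block_mat (0\<^sub>m n n) (1\<^sub>m n) P Q)"
proof (cases "n = 0")
  case True
  \<comment> \<open>\<open>rho\<close> of a \<open>0 \<times> 0\<close> matrix is the unspecified \<open>Max {}\<close>, but all such matrices coincide\<close>
  have "four_block_mat (0\<^sub>m n n) (1\<^sub>m n) P Q = P + Q"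
    using True P Q by (intro eq_matI) auto
  thus ?thesis by simp
next
  case False
  hence n: "0 < n" by simp
  define r where "r = rho (P + Q)"
  have PQ: "P + Q \<in> carrier_mat n n" using P Q by simp
  have r: "0 \<le> r" "r \<le> 1" using rho_nonneg[OF PQ n] rho_le_1 unfolding r_def by auto
  have PQ_nonneg: "0\<^sub>m n n \<le> P + Q"
    by (rule nonneg_matI[OF PQ]) (use P Q nonneg_matD[OF P_nonneg] nonneg_matD[OF Q_nonneg] in simp)
  obtain y where y_nonneg: "0\<^sub>v n \<le> y" and y_nonzero: "y \<noteq> 0\<^sub>v n"
    and PQy: "r \<cdot>\<^sub>v y \<le> (P + Q) *\<^sub>v y"
    using nonneg_mat_rho_subinvariant_vec[OF PQ PQ_nonneg n, folded r_def] .
  have y: "y \<in> carrier_vec n" using carrier_vec_if_nonneg[OF y_nonneg] .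
  define B where "B = four_block_mat (0\<^sub>m n n) (1\<^sub>m n) P Q"
  have B: "B \<in> carrier_mat (n + n) (n + n)" using P Q unfolding B_def by auto
  have "0\<^sub>m (n + n) (n + n) \<le> B"
    by (rule nonneg_matI[OF B])
      (use P Q nonneg_matD[OF P_nonneg] nonneg_matD[OF Q_nonneg] in \<open>simp add: B_def\<close>)
  moreover have "0\<^sub>v (n + n) \<le> y @\<^sub>v (r \<cdot>\<^sub>v y)"
    using y nonneg_vecD[OF y_nonneg] r by (intro nonneg_vecI) auto
  moreover have "y @\<^sub>v (r \<cdot>\<^sub>v y) \<noteq> 0\<^sub>v (n + n)"
  proof
    assume x0: "y @\<^sub>v (r \<cdot>\<^sub>v y) = 0\<^sub>v (n + n)"
    obtain j where j: "j < n" and "y $ j \<noteq> 0" using nonzero_vec_index[OF y y_nonzero] .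
    moreover have "(y @\<^sub>v (r \<cdot>\<^sub>v y)) $ j = y $ j" using j y by simp
    ultimately show False using x0 by simp
  qed
  moreover have "r \<cdot>\<^sub>v (y @\<^sub>v (r \<cdot>\<^sub>v y)) \<le> B *\<^sub>v (y @\<^sub>v (r \<cdot>\<^sub>v y))"
    unfolding B_def by (rule four_block_companion_subinvariant[OF P Q P_nonneg y_nonneg r PQy])
  ultimately have "r \<le> rho B" by (rule rho_ge_if_smult_le_mult_mat_vec[OF B])
  thus ?thesis unfolding r_def B_def .
qed

subsection \<open>Diagonal scalings of row-stochastic matrices\<close>

lemma diagonal_mat_mult_index:
  assumes D: "D \<in> carrier_mat n n" and "diagonal_mat D" and X: "X \<in> carrier_mat n m"
    and i: "i < n" and j: "j < m"
  shows "(D * X) $$ (i,j) = D $$ (i,i) * X $$ (i,j)"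
proof -
  have "(D * X) $$ (i,j) = (\<Sum>l<n. D $$ (i,l) * X $$ (l,j))"
    by (rule index_mult_mat_sum[OF D X i j])
  also have "\<dots> = (\<Sum>l<n. if l = i then D $$ (i,i) * X $$ (i,j) else 0)"
    using assms by (intro sum.cong) (auto simp: diagonal_mat_def)
  finally show ?thesis using i by simp
qed

lemma diag_of_vec_carrier_mat: "v \<in> carrier_vec n \<Longrightarrow> diag_of_vec v \<in> carrier_mat n n"
  by (simp add: diag_of_vec_def)

lemma diagonal_mat_nonneg:
  fixes D :: "'a :: {zero, order} mat"
  assumes D: "D \<in> carrier_mat n n" and "diagonal_mat D" and "\<And>i. i < n \<Longrightarrow> 0 \<le> D $$ (i,i)"
  shows "0\<^sub>m n n \<le> D"
proof (rule nonneg_matI[OF D])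
  fix i j assume "i < n" and "j < n"
  thus "0 \<le> D $$ (i,j)" using assms by (cases "i = j") (auto simp: diagonal_mat_def)
qed

lemma diag_of_vec_nonneg:
  fixes v :: "'a :: {zero, order} vec"
  assumes v: "v \<in> carrier_vec n" and "\<And>i. i < n \<Longrightarrow> 0 \<le> v $ i"
  shows "0\<^sub>m n n \<le> diag_of_vec v"
  by (rule nonneg_matI[OF diag_of_vec_carrier_mat[OF v]]) (use assms in \<open>simp add: diag_of_vec_def\<close>)

lemma diag_of_vec_add_complement:
  fixes v :: "'a :: ring_1 vec"
  assumes "v \<in> carrier_vec n"
  shows "diag_of_vec v + diag_of_vec (vec n (\<lambda>i. 1 - v $ i)) = 1\<^sub>m n"
  using assms by (intro eq_matI) (auto simp: diag_of_vec_def)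

lemma nonneg_mat_mult_diag_of_vec_mult:
  fixes A W :: "'a :: ordered_semiring_0 mat"
  assumes A: "A \<in> carrier_mat m n" and v: "v \<in> carrier_vec n" and W: "W \<in> carrier_mat n k"
    and A_nonneg: "0\<^sub>m m n \<le> A" and v_nonneg: "\<And>i. i < n \<Longrightarrow> 0 \<le> v $ i"
    and W_nonneg: "0\<^sub>m n k \<le> W"
  shows "0\<^sub>m m k \<le> A * (diag_of_vec v * W)"
proof -
  note Dv = diag_of_vec_carrier_mat[OF v]
  have "0\<^sub>m n k \<le> diag_of_vec v * W"
    using nonneg_mat_mult[OF Dv W diag_of_vec_nonneg[OF v v_nonneg] W_nonneg] .
  from nonneg_mat_mult[OF A mult_carrier_mat[OF Dv W] A_nonneg this] show ?thesis .
qed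

lemma mult_diag_of_vec_complement:
  fixes A W :: "'a :: comm_ring_1 mat"
  assumes A: "A \<in> carrier_mat m n" and v: "v \<in> carrier_vec n" and W: "W \<in> carrier_mat n k"
  shows "A * (diag_of_vec v * W) + A * (diag_of_vec (vec n (\<lambda>i. 1 - v $ i)) * W) = A * W"
proof -
  let ?w = "vec n (\<lambda>i. 1 - v $ i)"
  have w: "?w \<in> carrier_vec n" by simp
  have "A * (diag_of_vec v * W) + A * (diag_of_vec ?w * W) = A * ((diag_of_vec v + diag_of_vec ?w) * W)"
    using mult_add_distrib_mat[OF A mult_carrier_mat[OF _ W] mult_carrier_mat[OF _ W]]
      add_mult_distrib_mat[OF _ _ W] diag_of_vec_carrier_mat[OF v] diag_of_vec_carrier_mat[OF w]
    by simp
  also have "\<dots> = A * W"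
    unfolding diag_of_vec_add_complement[OF v] using W by simp
  finally show ?thesis .
qed

lemma row_stochastic_nonneg: "W \<in> carrier_mat nr nc \<Longrightarrow> row_stochastic W \<Longrightarrow> 0\<^sub>m nr nc \<le> W"
  by (rule nonneg_matI) (auto simp: row_stochastic_def)

lemma rho_diagonal_mat_mult_row_stochastic_le_1:
  fixes D W :: "real mat"
  assumes D: "D \<in> carrier_mat n n" and D_diag: "diagonal_mat D"
    and D_range: "\<forall>i<n. 0 \<le> D $$ (i,i) \<and> D $$ (i,i) \<le> 1"
    and W: "W \<in> carrier_mat n n" and W_stoch: "row_stochastic W" and n: "0 < n"
  shows "rho (D * W) \<le> 1"
proof (rule nonneg_mat_row_sums_le_1_rho_le_1)
  show "0\<^sub>m n n \<le> D * W"
    using diagonal_mat_nonneg[OF D D_diag] D_range row_stochastic_nonneg[OF W W_stoch]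
    by (intro nonneg_mat_mult[OF D W]) auto
  fix i assume i: "i < n"
  have "(\<Sum>j<n. (D * W) $$ (i,j)) = D $$ (i,i) * (\<Sum>j<n. W $$ (i,j))"
    unfolding sum_distrib_left by (intro sum.cong) (use diagonal_mat_mult_index[OF D D_diag W i] in auto)
  also have "\<dots> = D $$ (i,i)"
    using W_stoch W i unfolding row_stochastic_def by simp
  finally show "(\<Sum>j<n. (D * W) $$ (i,j)) \<le> 1" using D_range i by simp
qed (use D W n in auto)

theorem corollary2:
  fixes n :: nat and Lam W :: "real mat" and \<beta> :: "real vec"
  assumes Lam: "Lam \<in> carrier_mat n n" and Lam_diag: "diagonal_mat Lam"
    and Lam_range: "\<forall>i<n. 0 \<le> Lam $$ (i,i) \<and> Lam $$ (i,i) \<le> 1"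
    and W: "W \<in> carrier_mat n n" and W_stoch: "row_stochastic W"
    and \<beta>: "\<beta> \<in> carrier_vec n" and \<beta>_range: "\<forall>i<n. 0 \<le> \<beta> $ i \<and> \<beta> $ i \<le> 1"
  shows "rho (four_block_mat (0\<^sub>m n n) (1\<^sub>m n)
                (Lam * (diag_of_vec \<beta> * W))
                (Lam * (diag_of_vec (vec n (\<lambda>i. 1 - \<beta> $ i)) * W)))
         \<ge> rho (Lam * W)"
proof (cases "n = 0")
  case True
  have "four_block_mat (0\<^sub>m n n) (1\<^sub>m n) (Lam * (diag_of_vec \<beta> * W))
          (Lam * (diag_of_vec (vec n (\<lambda>i. 1 - \<beta> $ i)) * W)) = Lam * W"
    using True Lam W by (intro eq_matI) auto
  thus ?thesis by simp
next
  case False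
  define \<gamma> where "\<gamma> = vec n (\<lambda>i. 1 - \<beta> $ i)"
  have \<gamma>: "\<gamma> \<in> carrier_vec n" unfolding \<gamma>_def by simp
  have \<beta>_nonneg: "0 \<le> \<beta> $ i" and \<gamma>_nonneg: "0 \<le> \<gamma> $ i" if "i < n" for i
    using \<beta>_range that unfolding \<gamma>_def by auto
  have Lam_nonneg: "0\<^sub>m n n \<le> Lam" using diagonal_mat_nonneg[OF Lam Lam_diag] Lam_range by blast
  note W_nonneg = row_stochastic_nonneg[OF W W_stoch]
  have "rho (Lam * W) \<le> 1"
    using rho_diagonal_mat_mult_row_stochastic_le_1[OF Lam Lam_diag Lam_range W W_stoch] False by simp
  with rho_companion_block_ge[of "Lam * (diag_of_vec \<beta> * W)" n "Lam * (diag_of_vec \<gamma> * W)",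
      unfolded mult_diag_of_vec_complement[OF Lam \<beta> W, folded \<gamma>_def]]
    nonneg_mat_mult_diag_of_vec_mult[OF Lam \<beta> W Lam_nonneg \<beta>_nonneg W_nonneg]
    nonneg_mat_mult_diag_of_vec_mult[OF Lam \<gamma> W Lam_nonneg \<gamma>_nonneg W_nonneg]
  show ?thesis
    using Lam W diag_of_vec_carrier_mat[OF \<beta>] diag_of_vec_carrier_mat[OF \<gamma>] unfolding \<gamma>_def by simp
qed

end
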